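(* Let $P$ be a poset and $n>1$ an integer. Then for every element $a_0$ of $\mathrm{id}^n(P)$ that is not compact, there is a chain $a_0<a_1<\dots<a_{n-1}$ in $\mathrm{id}^n(P)$ where, for each $i=1,\dots,n-1$, $a_i$ is the least $i$-compact element of $\mathrm{id}^n(P)$ majorizing $a_{i-1}$ (in particular, such a least element exists).
   Context: For a poset $P$, an ideal of $P$ is an upward directed downset of $P$ (downset: $x\le y\in d\Rightarrow x\in d$; upward directed: every two elements have a common upper bound in the set). $\mathrm{id}(P)$ is the set of nonempty ideals of $P$ ordered by inclusion, and $\mathrm{id}^n$ denotes the $n$-fold iterate of this construction. An element $x$ of a poset $Q$ is compact if for every upward directed subset $D\subseteq Q$ which has a least upper bound $\bigvee D$ in $Q$ with $\bigvee D\ge x$, some $y\in D$ satisfies $y\ge x$. The $1$-compact elements of $Q$ are its compact elements; inductively, for $n\ge2$, the $n$-compact elements of $Q$ are those $(n-1)$-compact elements of $Q$ which are compact in the subposet of $(n-1)$-compact elements of $Q$. *)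

theory Defs
  imports Main
begin

text \<open>Posets are given by a carrier set together with an order relation
  (only its restriction to the carrier matters).\<close>

definition partial_order_on' :: "'a set \<Rightarrow> ('a \<Rightarrow> 'a \<Rightarrow> bool) \<Rightarrow> bool" where
  "partial_order_on' A le \<longleftrightarrow>
     (\<forall>x\<in>A. le x x) \<and>
     (\<forall>x\<in>A. \<forall>y\<in>A. le x y \<and> le y x \<longrightarrow> x = y) \<and>
     (\<forall>x\<in>A. \<forall>y\<in>A. \<forall>z\<in>A. le x y \<and> le y z \<longrightarrow> le x z)"

definition up_directed :: "'a set \<Rightarrow> ('a \<Rightarrow> 'a \<Rightarrow> bool) \<Rightarrow> bool" where
  "up_directed D le \<longleftrightarrow> (\<forall>x\<in>D. \<forall>y\<in>D. \<exists>z\<in>D. le x z \<and> le y z)"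

definition downset :: "'a set \<Rightarrow> ('a \<Rightarrow> 'a \<Rightarrow> bool) \<Rightarrow> 'a set \<Rightarrow> bool" where
  "downset A le d \<longleftrightarrow> d \<subseteq> A \<and> (\<forall>x\<in>A. \<forall>y\<in>d. le x y \<longrightarrow> x \<in> d)"

text \<open>The nonempty ideals of the poset (A, le); id(A) is ordered by inclusion.\<close>
definition ideals :: "'a set \<Rightarrow> ('a \<Rightarrow> 'a \<Rightarrow> bool) \<Rightarrow> 'a set set" where
  "ideals A le = {d. d \<noteq> {} \<and> downset A le d \<and> up_directed d le}"

definition order_iso :: "'a set \<Rightarrow> ('a \<Rightarrow> 'a \<Rightarrow> bool) \<Rightarrow> 'b set \<Rightarrow> ('b \<Rightarrow> 'b \<Rightarrow> bool) \<Rightarrow> bool" where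
  "order_iso A leA B leB \<longleftrightarrow>
     (\<exists>f. bij_betw f A B \<and> (\<forall>x\<in>A. \<forall>y\<in>A. leA x y \<longleftrightarrow> leB (f x) (f y)))"

text \<open>is_id_iter n P le Q leQ: the poset (Q, leQ) is isomorphic to id^n(P, le).
  The intermediate iterates are represented (up to isomorphism) in the type of Q.\<close>
fun is_id_iter :: "nat \<Rightarrow> 'a set \<Rightarrow> ('a \<Rightarrow> 'a \<Rightarrow> bool) \<Rightarrow> 'u set \<Rightarrow> ('u \<Rightarrow> 'u \<Rightarrow> bool) \<Rightarrow> bool" where
  "is_id_iter 0 P le Q leQ \<longleftrightarrow> order_iso P le Q leQ"
| "is_id_iter (Suc n) P le Q leQ \<longleftrightarrow>
     (\<exists>R leR. is_id_iter n P le R leR \<and> order_iso (ideals R leR) (\<subseteq>) Q leQ)"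

definition is_lub :: "'a set \<Rightarrow> ('a \<Rightarrow> 'a \<Rightarrow> bool) \<Rightarrow> 'a set \<Rightarrow> 'a \<Rightarrow> bool" where
  "is_lub A le D s \<longleftrightarrow> s \<in> A \<and> (\<forall>d\<in>D. le d s) \<and> (\<forall>u\<in>A. (\<forall>d\<in>D. le d u) \<longrightarrow> le s u)"

text \<open>Compact elements (directed sets are taken nonempty, as usual).\<close>
definition compact_el :: "'a set \<Rightarrow> ('a \<Rightarrow> 'a \<Rightarrow> bool) \<Rightarrow> 'a \<Rightarrow> bool" where
  "compact_el A le x \<longleftrightarrow> x \<in> A \<and>
     (\<forall>D. D \<subseteq> A \<and> D \<noteq> {} \<and> up_directed D le \<longrightarrow>
        (\<forall>s. is_lub A le D s \<and> le x s \<longrightarrow> (\<exists>y\<in>D. le x y)))"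

fun kcompact :: "'a set \<Rightarrow> ('a \<Rightarrow> 'a \<Rightarrow> bool) \<Rightarrow> nat \<Rightarrow> 'a set" where
  "kcompact A le 0 = A"
| "kcompact A le (Suc k) = {x. compact_el (kcompact A le k) le x}"

definition is_least :: "'a set \<Rightarrow> ('a \<Rightarrow> 'a \<Rightarrow> bool) \<Rightarrow> 'a \<Rightarrow> bool" where
  "is_least S le x \<longleftrightarrow> x \<in> S \<and> (\<forall>y\<in>S. le x y)"

end

theory Submission
  imports Defs
begin

text \<open>In any poset R the compact elements of id(R) are exactly the principal ideals, so they
  form a copy of R. If R is moreover directed complete and an ideal I is not compact, the principal
  ideal of the supremum u of I is the least compact ideal above I, and u is not compact in R.
  Since id^(n-1)(P) is directed complete for n \<ge> 2, the step from a0 to a1 lands in the compact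
  part of id^n(P), a copy of id^(n-1)(P), at an element that is again not compact there; as the
  i-compact elements of id^n(P) are the (i-1)-compact elements of its compact part, induction on n
  gives the chain.\<close>

definition order_iso_by :: "('a \<Rightarrow> 'b) \<Rightarrow> 'a set \<Rightarrow> ('a \<Rightarrow> 'a \<Rightarrow> bool) \<Rightarrow> 'b set \<Rightarrow> ('b \<Rightarrow> 'b \<Rightarrow> bool) \<Rightarrow> bool" where
  "order_iso_by f A le B le' \<longleftrightarrow> bij_betw f A B \<and> (\<forall>x\<in>A. \<forall>y\<in>A. le x y \<longleftrightarrow> le' (f x) (f y))"

lemma order_iso_iff_order_iso_by: "order_iso A le B le' \<longleftrightarrow> (\<exists>f. order_iso_by f A le B le')"
  unfolding order_iso_def order_iso_by_def ..

lemma order_iso_by_comp: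
  "order_iso_by f A la B lb \<Longrightarrow> order_iso_by g B lb C lc \<Longrightarrow> order_iso_by (g \<circ> f) A la C lc"
  unfolding order_iso_by_def by (auto intro: bij_betw_trans dest: bij_betwE)

lemma order_iso_trans: "order_iso A la B lb \<Longrightarrow> order_iso B lb C lc \<Longrightarrow> order_iso A la C lc"
  unfolding order_iso_iff_order_iso_by by (metis order_iso_by_comp)

definition directed_complete :: "'a set \<Rightarrow> ('a \<Rightarrow> 'a \<Rightarrow> bool) \<Rightarrow> bool" where
  "directed_complete A le \<longleftrightarrow> (\<forall>D. D \<subseteq> A \<and> D \<noteq> {} \<and> up_directed D le \<longrightarrow> (\<exists>s. is_lub A le D s))"

lemma compact_el_mem: "compact_el A le x \<Longrightarrow> x \<in> A"
  unfolding compact_el_def by simp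

lemma compact_elD:
  "compact_el A le x \<Longrightarrow> D \<subseteq> A \<Longrightarrow> D \<noteq> {} \<Longrightarrow> up_directed D le \<Longrightarrow> is_lub A le D s \<Longrightarrow> le x s
    \<Longrightarrow> \<exists>y\<in>D. le x y"
  unfolding compact_el_def by blast

context
  fixes f :: "'a \<Rightarrow> 'b" and A :: "'a set" and le :: "'a \<Rightarrow> 'a \<Rightarrow> bool"
    and B :: "'b set" and le' :: "'b \<Rightarrow> 'b \<Rightarrow> bool"
  assumes iso: "order_iso_by f A le B le'"
begin

lemma order_iso_by_image: "f ` A = B"
  using iso unfolding order_iso_by_def bij_betw_def by blast

lemma order_iso_by_mem: "x \<in> A \<Longrightarrow> f x \<in> B"
  using order_iso_by_image by blast

lemma order_iso_by_le: "x \<in> A \<Longrightarrow> y \<in> A \<Longrightarrow> le' (f x) (f y) \<longleftrightarrow> le x y"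
  using iso unfolding order_iso_by_def by blast

lemma order_iso_by_eq_iff: "x \<in> A \<Longrightarrow> y \<in> A \<Longrightarrow> f x = f y \<longleftrightarrow> x = y"
  using iso unfolding order_iso_by_def bij_betw_def inj_on_def by blast

lemma order_iso_by_restrict: "S \<subseteq> A \<Longrightarrow> order_iso_by f S le (f ` S) le'"
  using iso unfolding order_iso_by_def by (auto intro: bij_betw_subset)

lemma order_iso_by_up_directed: "D \<subseteq> A \<Longrightarrow> up_directed (f ` D) le' \<longleftrightarrow> up_directed D le"
  unfolding up_directed_def by (auto simp: order_iso_by_le subset_iff)

lemma order_iso_by_is_lub:
  "D \<subseteq> A \<Longrightarrow> s \<in> A \<Longrightarrow> is_lub B le' (f ` D) (f s) \<longleftrightarrow> is_lub A le D s"
  unfolding is_lub_def order_iso_by_image[symmetric] by (auto simp: order_iso_by_le subset_iff)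

lemma order_iso_by_is_least:
  "S \<subseteq> A \<Longrightarrow> y \<in> A \<Longrightarrow> is_least (f ` S) le' (f y) \<longleftrightarrow> is_least S le y"
  unfolding is_least_def by (auto simp: order_iso_by_le order_iso_by_eq_iff subset_iff)

lemma order_iso_by_compact_el:
  assumes x: "x \<in> A"
  shows "compact_el B le' (f x) \<longleftrightarrow> compact_el A le x"
proof
  assume c: "compact_el B le' (f x)"
  show "compact_el A le x"
    unfolding compact_el_def
  proof (intro conjI allI impI)
    fix D s assume D: "D \<subseteq> A \<and> D \<noteq> {} \<and> up_directed D le" and s: "is_lub A le D s \<and> le x s"
    then have DA: "D \<subseteq> A" and sA: "s \<in> A" unfolding is_lub_def by blast+
    have "f ` D \<subseteq> B \<and> f ` D \<noteq> {} \<and> up_directed (f ` D) le'"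
      using D order_iso_by_image order_iso_by_up_directed[OF DA] by blast
    moreover have "is_lub B le' (f ` D) (f s) \<and> le' (f x) (f s)"
      using s order_iso_by_is_lub[OF DA sA] order_iso_by_le[OF x sA] by blast
    ultimately obtain y where "y \<in> D" "le' (f x) (f y)"
      using c unfolding compact_el_def by blast
    then show "\<exists>y\<in>D. le x y" using DA x order_iso_by_le by blast
  qed (fact x)
next
  assume c: "compact_el A le x"
  show "compact_el B le' (f x)"
    unfolding compact_el_def
  proof (intro conjI allI impI)
    fix D' s' assume D': "D' \<subseteq> B \<and> D' \<noteq> {} \<and> up_directed D' le'"
      and s': "is_lub B le' D' s' \<and> le' (f x) s'"
    obtain D where DA: "D \<subseteq> A" and D'_eq: "D' = f ` D"
      using D' order_iso_by_image subset_image_iff by metis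
    obtain s where sA: "s \<in> A" and s'_eq: "s' = f s"
      using s' order_iso_by_image unfolding is_lub_def by blast
    have "D \<subseteq> A \<and> D \<noteq> {} \<and> up_directed D le"
      using DA D' order_iso_by_up_directed[OF DA] unfolding D'_eq by blast
    moreover have "is_lub A le D s \<and> le x s"
      using s' order_iso_by_is_lub[OF DA sA] order_iso_by_le[OF x sA] unfolding D'_eq s'_eq by blast
    ultimately obtain y where "y \<in> D" "le x y"
      using c unfolding compact_el_def by blast
    then show "\<exists>y\<in>D'. le' (f x) y" using DA x order_iso_by_le unfolding D'_eq by blast
  qed (fact order_iso_by_mem[OF x])
qed

lemma order_iso_by_Ball: "(\<forall>y\<in>B. Q y) \<longleftrightarrow> (\<forall>x\<in>A. Q (f x))"
  using order_iso_by_image by blast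

lemma order_iso_by_partial_order: "partial_order_on' A le \<Longrightarrow> partial_order_on' B le'"
  unfolding partial_order_on'_def order_iso_by_Ball
  \<comment> \<open>antisymmetry of \<open>le\<close> used as a rewrite rule would make the simplifier loop\<close>
  by (simp (no_asm_use) add: order_iso_by_le order_iso_by_eq_iff cong: ball_cong)

lemma order_iso_by_compact_set: "f ` {x. compact_el A le x} = {y. compact_el B le' y}"
proof (intro equalityI subsetI)
  fix y assume "y \<in> f ` {x. compact_el A le x}"
  then obtain x where c: "compact_el A le x" and y: "y = f x" by blast
  have "compact_el B le' (f x)"
    using order_iso_by_compact_el[OF compact_el_mem[OF c]] c by (rule iffD2)
  then show "y \<in> {y. compact_el B le' y}" using y by simp
next
  fix y assume "y \<in> {y. compact_el B le' y}"
  then have c: "compact_el B le' y" by simp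
  moreover have "y \<in> f ` A"
    using compact_el_mem[OF c] order_iso_by_image by simp
  ultimately obtain x where x: "x \<in> A" and y: "y = f x" by blast
  have "compact_el A le x"
    using order_iso_by_compact_el[OF x] c[unfolded y] by (rule iffD1)
  then show "y \<in> f ` {x. compact_el A le x}" using y by blast
qed

lemma order_iso_by_directed_complete: "directed_complete A le \<Longrightarrow> directed_complete B le'"
  unfolding directed_complete_def
proof (intro allI impI)
  fix D' assume dc: "\<forall>D. D \<subseteq> A \<and> D \<noteq> {} \<and> up_directed D le \<longrightarrow> (\<exists>s. is_lub A le D s)"
    and D': "D' \<subseteq> B \<and> D' \<noteq> {} \<and> up_directed D' le'"
  obtain D where DA: "D \<subseteq> A" and D'_eq: "D' = f ` D"
    using D' order_iso_by_image subset_image_iff by metis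
  have "D \<noteq> {}" "up_directed D le"
    using D' order_iso_by_up_directed[OF DA] unfolding D'_eq by auto
  then obtain s where s: "is_lub A le D s"
    using dc DA by blast
  then have "s \<in> A"
    unfolding is_lub_def by simp
  then have "is_lub B le' D' (f s)"
    using s order_iso_by_is_lub[OF DA] unfolding D'_eq by simp
  then show "\<exists>s'. is_lub B le' D' s'" ..
qed

lemma order_iso_by_image_above:
  "S \<subseteq> A \<Longrightarrow> x \<in> A \<Longrightarrow> {c \<in> f ` S. le' (f x) c} = f ` {c \<in> S. le x c}"
  using order_iso_by_le by auto

end

lemma kcompact_subset: "kcompact A le k \<subseteq> A"
  by (induction k) (auto dest: compact_el_mem)

lemma order_iso_by_kcompact:
  assumes iso: "order_iso_by f A le B le'"
  shows "f ` kcompact A le k = kcompact B le' k"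
proof (induction k)
  case 0
  show ?case using order_iso_by_image[OF iso] by simp
next
  case (Suc k)
  have "order_iso_by f (kcompact A le k) le (kcompact B le' k) le'"
    using order_iso_by_restrict[OF iso kcompact_subset[of A le k]] Suc.IH by simp
  then show ?case
    using order_iso_by_compact_set by simp
qed

lemma kcompact_Suc_shift: "kcompact A le (Suc k) = kcompact (kcompact A le 1) le k"
  by (induction k) auto

lemma is_id_iter_order_iso:
  fixes R C :: "'u set"
  assumes "is_id_iter n P le R leR" "order_iso R leR C leC"
  shows "is_id_iter n P le C leC"
proof (cases n)
  case 0
  then show ?thesis using assms order_iso_trans by auto
next
  case (Suc m)
  then show ?thesis using assms order_iso_trans by (simp only: is_id_iter.simps(2)) blast
qed

lemma mem_ideals: "I \<in> ideals R le \<longleftrightarrow> I \<noteq> {} \<and> I \<subseteq> R \<and> (\<forall>x\<in>R. \<forall>y\<in>I. le x y \<longrightarrow> x \<in> I)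
   \<and> (\<forall>x\<in>I. \<forall>y\<in>I. \<exists>z\<in>I. le x z \<and> le y z)"
  unfolding ideals_def downset_def up_directed_def by auto

lemma ideals_partial_order: "partial_order_on' (ideals R le) (\<subseteq>)"
  unfolding partial_order_on'_def by auto

lemma Union_directed_in_ideals:
  assumes "D \<subseteq> ideals R le" "D \<noteq> {}" "up_directed D (\<subseteq>)"
  shows "\<Union>D \<in> ideals R le"
proof -
  have "\<exists>z\<in>\<Union>D. le x z \<and> le y z" if xy: "x \<in> \<Union>D" "y \<in> \<Union>D" for x y
  proof -
    obtain d1 d2 where "d1 \<in> D" "d2 \<in> D" "x \<in> d1" "y \<in> d2" using xy by blast
    moreover obtain d where "d \<in> D" "d1 \<subseteq> d" "d2 \<subseteq> d"
      using assms(3) \<open>d1 \<in> D\<close> \<open>d2 \<in> D\<close> unfolding up_directed_def by blast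
    ultimately have "d \<in> ideals R le" "x \<in> d" "y \<in> d" using assms(1) by blast+
    then obtain z where "z \<in> d" "le x z" "le y z" unfolding mem_ideals by blast
    then show ?thesis using \<open>d \<in> D\<close> by blast
  qed
  then show ?thesis
    using assms(1,2) unfolding mem_ideals subset_iff by blast
qed

lemma is_lub_ideals_Union:
  "D \<subseteq> ideals R le \<Longrightarrow> D \<noteq> {} \<Longrightarrow> up_directed D (\<subseteq>) \<Longrightarrow> is_lub (ideals R le) (\<subseteq>) D (\<Union>D)"
  unfolding is_lub_def using Union_directed_in_ideals by blast

lemma ideals_directed_complete: "directed_complete (ideals R le) (\<subseteq>)"
  unfolding directed_complete_def using is_lub_ideals_Union by blast

lemma is_id_iter_Suc_directed_complete:
  fixes R :: "'u set"
  assumes "is_id_iter (Suc m) P le R leR"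
  shows "partial_order_on' R leR" "directed_complete R leR"
proof -
  obtain R' :: "'u set" and leR' where "order_iso (ideals R' leR') (\<subseteq>) R leR"
    using assms by auto
  then obtain f where "order_iso_by f (ideals R' leR') (\<subseteq>) R leR"
    using order_iso_iff_order_iso_by by blast
  then show "partial_order_on' R leR" "directed_complete R leR"
    using order_iso_by_partial_order ideals_partial_order
      order_iso_by_directed_complete ideals_directed_complete by blast+
qed

definition principal_ideal :: "'a set \<Rightarrow> ('a \<Rightarrow> 'a \<Rightarrow> bool) \<Rightarrow> 'a \<Rightarrow> 'a set" where
  "principal_ideal R le x = {y \<in> R. le y x}"

lemma principal_ideal_subset_ideal:
  "I \<in> ideals R le \<Longrightarrow> x \<in> I \<Longrightarrow> principal_ideal R le x \<subseteq> I"
  unfolding principal_ideal_def mem_ideals by blast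

context
  fixes R :: "'a set" and le :: "'a \<Rightarrow> 'a \<Rightarrow> bool"
  assumes po: "partial_order_on' R le"
begin

lemma principal_ideal_in_ideals: "x \<in> R \<Longrightarrow> principal_ideal R le x \<in> ideals R le"
  using po unfolding mem_ideals principal_ideal_def partial_order_on'_def by blast

lemma principal_ideal_self: "x \<in> R \<Longrightarrow> x \<in> principal_ideal R le x"
  using po unfolding principal_ideal_def partial_order_on'_def by blast

lemma principal_ideal_subset_iff:
  "x \<in> R \<Longrightarrow> y \<in> R \<Longrightarrow> principal_ideal R le x \<subseteq> principal_ideal R le y \<longleftrightarrow> le x y"
  using po unfolding principal_ideal_def partial_order_on'_def by blast

lemma principal_ideal_eq_iff:
  "x \<in> R \<Longrightarrow> y \<in> R \<Longrightarrow> principal_ideal R le x = principal_ideal R le y \<longleftrightarrow> x = y"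
  using po principal_ideal_subset_iff unfolding partial_order_on'_def by (metis order_refl subset_antisym)

lemma ideal_is_lub_principal_ideals:
  assumes I: "I \<in> ideals R le"
  shows "up_directed (principal_ideal R le ` I) (\<subseteq>)"
    and "is_lub (ideals R le) (\<subseteq>) (principal_ideal R le ` I) I"
proof -
  have IR: "I \<subseteq> R" using I unfolding mem_ideals by blast
  show "up_directed (principal_ideal R le ` I) (\<subseteq>)"
    using I IR principal_ideal_subset_iff unfolding up_directed_def mem_ideals
    by (simp add: subset_iff)
  have "I \<subseteq> U" if "\<forall>d\<in>principal_ideal R le ` I. d \<subseteq> U" for U
    using that IR principal_ideal_self by blast
  then show "is_lub (ideals R le) (\<subseteq>) (principal_ideal R le ` I) I"
    using I principal_ideal_subset_ideal[OF I] unfolding is_lub_def by blast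
qed

lemma compact_ideal_iff_principal:
  "compact_el (ideals R le) (\<subseteq>) I \<longleftrightarrow> (\<exists>x\<in>R. I = principal_ideal R le x)"
proof
  assume c: "compact_el (ideals R le) (\<subseteq>) I"
  then have I: "I \<in> ideals R le" by (rule compact_el_mem)
  then have IR: "I \<subseteq> R" unfolding mem_ideals by blast
  have "principal_ideal R le ` I \<subseteq> ideals R le"
    using IR principal_ideal_in_ideals by blast
  moreover have "principal_ideal R le ` I \<noteq> {}"
    using I unfolding mem_ideals by blast
  ultimately obtain x where x: "x \<in> I" "I \<subseteq> principal_ideal R le x"
    using compact_elD[OF c _ _ ideal_is_lub_principal_ideals[OF I]] by blast
  moreover have "principal_ideal R le x \<subseteq> I"
    by (rule principal_ideal_subset_ideal[OF I x(1)])
  ultimately show "\<exists>x\<in>R. I = principal_ideal R le x"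
    using IR by blast
next
  assume "\<exists>x\<in>R. I = principal_ideal R le x"
  then obtain x where xR: "x \<in> R" and I_eq: "I = principal_ideal R le x" by blast
  show "compact_el (ideals R le) (\<subseteq>) I"
    unfolding compact_el_def
  proof (intro conjI allI impI)
    fix D s assume D: "D \<subseteq> ideals R le \<and> D \<noteq> {} \<and> up_directed D (\<subseteq>)"
      and s: "is_lub (ideals R le) (\<subseteq>) D s \<and> I \<subseteq> s"
    have "is_lub (ideals R le) (\<subseteq>) D (\<Union>D)"
      using D by (blast intro: is_lub_ideals_Union)
    then have "s \<subseteq> \<Union>D"
      using s unfolding is_lub_def by blast
    moreover have "x \<in> s"
      using s principal_ideal_self[OF xR] unfolding I_eq by blast
    ultimately obtain d where d: "d \<in> D" "x \<in> d" by blast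
    moreover from d(1) D have "d \<in> ideals R le" by blast
    ultimately have "I \<subseteq> d"
      unfolding I_eq by (intro principal_ideal_subset_ideal)
    then show "\<exists>d\<in>D. I \<subseteq> d" using d(1) ..
  qed (simp add: I_eq principal_ideal_in_ideals[OF xR])
qed

lemma order_iso_by_principal_ideal:
  "order_iso_by (principal_ideal R le) R le (kcompact (ideals R le) (\<subseteq>) 1) (\<subseteq>)"
proof -
  have "principal_ideal R le ` R = kcompact (ideals R le) (\<subseteq>) 1"
    using compact_ideal_iff_principal by auto
  moreover have "inj_on (principal_ideal R le) R"
    using principal_ideal_eq_iff by (auto intro: inj_onI)
  ultimately show ?thesis
    unfolding order_iso_by_def bij_betw_def using principal_ideal_subset_iff by blast
qed

lemma least_compact_ideal_above:
  assumes I: "I \<in> ideals R le" and u: "is_lub R le I u"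
  shows "is_least {c \<in> kcompact (ideals R le) (\<subseteq>) 1. I \<subseteq> c} (\<subseteq>) (principal_ideal R le u)"
proof -
  have IR: "I \<subseteq> R" and uR: "u \<in> R"
    using I u unfolding mem_ideals is_lub_def by blast+
  have "I \<subseteq> principal_ideal R le x \<longleftrightarrow> (\<forall>d\<in>I. le d x)" for x
    using IR unfolding principal_ideal_def by blast
  then have "{c \<in> principal_ideal R le ` R. I \<subseteq> c} = principal_ideal R le ` {x \<in> R. \<forall>d\<in>I. le d x}"
    by blast
  moreover have "is_least {x \<in> R. \<forall>d\<in>I. le d x} le u"
    using u unfolding is_lub_def is_least_def by blast
  ultimately show ?thesis
    using order_iso_by_is_least[OF order_iso_by_principal_ideal, of "{x \<in> R. \<forall>d\<in>I. le d x}" u]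
      order_iso_by_image[OF order_iso_by_principal_ideal] uR
    by simp
qed

text \<open>A directed set whose supremum is compact contains the supremum; for an ideal this
  makes it principal.\<close>
lemma lub_of_noncompact_ideal_not_compact:
  assumes I: "I \<in> ideals R le" and nc: "\<not> compact_el (ideals R le) (\<subseteq>) I" and u: "is_lub R le I u"
  shows "\<not> compact_el R le u"
proof
  assume c: "compact_el R le u"
  have IR: "I \<subseteq> R" and uR: "u \<in> R"
    using I u unfolding mem_ideals is_lub_def by blast+
  have "I \<noteq> {}" "up_directed I le"
    using I unfolding ideals_def by blast+
  then obtain y where y: "y \<in> I" "le u y"
    using compact_elD[OF c IR _ _ u] po uR unfolding partial_order_on'_def by blast
  have "le y u"
    using u y(1) unfolding is_lub_def by blast
  then have "u \<in> I"
    using y po uR IR unfolding partial_order_on'_def by (metis subsetD)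
  then have "principal_ideal R le u \<subseteq> I"
    by (rule principal_ideal_subset_ideal[OF I])
  moreover have "I \<subseteq> principal_ideal R le u"
    using IR u unfolding is_lub_def principal_ideal_def by blast
  ultimately show False
    using nc uR unfolding compact_ideal_iff_principal by blast
qed

end

lemma order_iso_compact_part:
  assumes po: "partial_order_on' R le" and iso: "order_iso_by g (ideals R le) (\<subseteq>) Q leQ"
  shows "order_iso_by (g \<circ> principal_ideal R le) R le (kcompact Q leQ 1) leQ"
proof -
  have "order_iso_by g (kcompact (ideals R le) (\<subseteq>) 1) (\<subseteq>) (kcompact Q leQ 1) leQ"
    using order_iso_by_restrict[OF iso kcompact_subset] order_iso_by_kcompact[OF iso, of 1]
    by metis
  then show ?thesis
    by (rule order_iso_by_comp[OF order_iso_by_principal_ideal[OF po]])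
qed

lemma least_compact_above_noncompact:
  assumes po: "partial_order_on' R le" and dc: "directed_complete R le"
    and iso: "order_iso_by g (ideals R le) (\<subseteq>) Q leQ"
    and a0: "a0 \<in> Q" and nc: "\<not> compact_el Q leQ a0"
  obtains a1 where "is_least {c \<in> kcompact Q leQ 1. leQ a0 c} leQ a1"
    and "\<not> compact_el (kcompact Q leQ 1) leQ a1"
proof -
  let ?K = "kcompact (ideals R le) (\<subseteq>) 1"
  obtain I where I: "I \<in> ideals R le" and a0_eq: "a0 = g I"
    using a0 order_iso_by_image[OF iso] by blast
  have nc_I: "\<not> compact_el (ideals R le) (\<subseteq>) I"
    using nc order_iso_by_compact_el[OF iso I] unfolding a0_eq by simp
  obtain u where u: "is_lub R le I u"
    using dc I unfolding directed_complete_def ideals_def downset_def by blast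
  have uR: "u \<in> R"
    using u unfolding is_lub_def by simp
  have "\<not> compact_el (kcompact Q leQ 1) leQ (g (principal_ideal R le u))"
    using order_iso_by_compact_el[OF order_iso_compact_part[OF po iso] uR]
      lub_of_noncompact_ideal_not_compact[OF po I nc_I u] by simp
  moreover have "is_least {c \<in> kcompact Q leQ 1. leQ a0 c} leQ (g (principal_ideal R le u))"
  proof -
    have "{c \<in> kcompact Q leQ 1. leQ a0 c} = g ` {c \<in> ?K. I \<subseteq> c}"
      using order_iso_by_image_above[OF iso kcompact_subset[of _ "(\<subseteq>)" 1] I]
        order_iso_by_kcompact[OF iso, of 1]
      unfolding a0_eq by simp
    moreover have "{c \<in> ?K. I \<subseteq> c} \<subseteq> ideals R le"
      using kcompact_subset[of "ideals R le" "(\<subseteq>)" 1] by blast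
    ultimately show ?thesis
      using least_compact_ideal_above[OF po I u]
        order_iso_by_is_least[OF iso _ principal_ideal_in_ideals[OF po uR]]
      by simp
  qed
  ultimately show ?thesis using that by blast
qed

definition least_kcompact_chain :: "'a set \<Rightarrow> ('a \<Rightarrow> 'a \<Rightarrow> bool) \<Rightarrow> nat \<Rightarrow> (nat \<Rightarrow> 'a) \<Rightarrow> bool" where
  "least_kcompact_chain Q le n a \<longleftrightarrow>
     (\<forall>i\<in>{1..n-1}. is_least {c \<in> kcompact Q le i. le (a (i-1)) c} le (a i) \<and> a (i-1) \<noteq> a i)"

lemma Ball_atLeastAtMost_Suc_shift:
  "(\<forall>i\<in>{1..Suc n}. P i) \<longleftrightarrow> P 1 \<and> (\<forall>j\<in>{1..n}. P (Suc j))"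
proof -
  have "{1..Suc n} = insert 1 (Suc ` {1..n})"
    by (auto simp: image_iff)
  then show ?thesis
    by (simp only: ball_simps)
qed

lemma least_kcompact_chain_Suc_Suc:
  "least_kcompact_chain Q le (Suc (Suc n)) a \<longleftrightarrow>
     is_least {c \<in> kcompact Q le 1. le (a 0) c} le (a 1) \<and> a 0 \<noteq> a 1 \<and>
     least_kcompact_chain (kcompact Q le 1) le (Suc n) (\<lambda>i. a (Suc i))"
  unfolding least_kcompact_chain_def diff_Suc_1 Ball_atLeastAtMost_Suc_shift kcompact_Suc_shift
  by simp

lemma least_kcompact_chain_trivial: "n \<le> 1 \<Longrightarrow> least_kcompact_chain Q le n a"
  unfolding least_kcompact_chain_def by simp

lemma least_kcompact_chain_exists:
  fixes Q :: "'u set"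
  assumes "is_id_iter n P le Q leQ" and "a0 \<in> Q" and "\<not> compact_el Q leQ a0"
  shows "\<exists>a. a 0 = a0 \<and> least_kcompact_chain Q leQ n a"
  using assms
proof (induction n arbitrary: Q leQ a0)
  case 0
  show ?case by (intro exI[of _ "\<lambda>_. a0"]) (simp add: least_kcompact_chain_trivial)
next
  case (Suc n)
  show ?case
  proof (cases n)
    case 0
    then show ?thesis by (intro exI[of _ "\<lambda>_. a0"]) (simp add: least_kcompact_chain_trivial)
  next
    case (Suc m)
    obtain R :: "'u set" and leR where R: "is_id_iter n P le R leR"
      and "order_iso (ideals R leR) (\<subseteq>) Q leQ"
      using Suc.prems(1) by auto
    then obtain g where g: "order_iso_by g (ideals R leR) (\<subseteq>) Q leQ"
      unfolding order_iso_iff_order_iso_by by blast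
    have po: "partial_order_on' R leR" and dc: "directed_complete R leR"
      using is_id_iter_Suc_directed_complete R unfolding \<open>n = Suc m\<close> by blast+
    obtain a1 where a1: "is_least {c \<in> kcompact Q leQ 1. leQ a0 c} leQ a1"
      and nc1: "\<not> compact_el (kcompact Q leQ 1) leQ a1"
      using least_compact_above_noncompact[OF po dc g Suc.prems(2,3)] .
    have a1K: "a1 \<in> kcompact Q leQ 1"
      using a1 unfolding is_least_def by blast
    then have "a0 \<noteq> a1"
      using Suc.prems(3) by auto
    have "is_id_iter n P le (kcompact Q leQ 1) leQ"
      using is_id_iter_order_iso[OF R] order_iso_compact_part[OF po g]
      unfolding order_iso_iff_order_iso_by by blast
    then obtain b where "b 0 = a1" "least_kcompact_chain (kcompact Q leQ 1) leQ n b"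
      using Suc.IH[OF _ a1K nc1] by blast
    then have "least_kcompact_chain Q leQ (Suc n) (case_nat a0 b)"
      using a1 \<open>a0 \<noteq> a1\<close> unfolding \<open>n = Suc m\<close> least_kcompact_chain_Suc_Suc by simp
    then show ?thesis by (intro exI[of _ "case_nat a0 b"]) simp
  qed
qed

theorem lemma4p1:
  fixes P :: "'a set" and le :: "'a \<Rightarrow> 'a \<Rightarrow> bool"
    and Q :: "'u set" and leQ :: "'u \<Rightarrow> 'u \<Rightarrow> bool"
    and n :: nat and a0 :: 'u
  assumes "partial_order_on' P le"
    and "n > 1"
    and "is_id_iter n P le Q leQ"
    and "a0 \<in> Q" and "\<not> compact_el Q leQ a0"
  shows "\<exists>a :: nat \<Rightarrow> 'u. a 0 = a0 \<and>
           (\<forall>i\<in>{1..n-1}.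
              is_least {c \<in> kcompact Q leQ i. leQ (a (i-1)) c} leQ (a i)
              \<and> a (i-1) \<noteq> a i)"
  using least_kcompact_chain_exists[OF assms(3-5)] unfolding least_kcompact_chain_def .

end
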